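(* Assume the standing setup below. Let $\rho>0$, $\rho_{u_a}>0$ and $\tau\ge0$. If the state and adaptive input of the adaptive closed-loop system satisfy $\sup_{0\le t\le\tau}\|x(t)\|_\infty\le\rho$ and $\sup_{0\le t\le\tau}\|u_a(t)\|_\infty\le\rho_{u_a}$, then the prediction error satisfies $\sup_{0\le t\le\tau}\|\tilde x(t)\|_\infty\le\gamma_0(T)$, where $\gamma_0(T)\triangleq b_{f,\Omega(\rho)}\,\bar\alpha_0(T)\big(\bar\alpha_1(T)+\bar\alpha_2(T)+1\big)$.
   Context: Notation: $\|\cdot\|_\infty$ is the vector $\infty$-norm / induced matrix $\infty$-norm; $\Omega(\rho)=\{z:\|z\|_\infty\le\rho\}$; $\mathfrak{L}$ is Laplace transform. Standing setup: $A_m\in\mathbb{R}^{n\times n}$ Hurwitz, $B\in\mathbb{R}^{n\times m}$ full column rank, $B_v\in\mathbb{R}^{n\times m}$, $v$ a bounded piecewise-continuous command, $x_0\in\mathbb{R}^n$. The uncertainty $f:[0,\infty)\times\mathbb{R}^n\to\mathbb{R}^m$ satisfies: for every compact $\mathcal{Z}$ there are constants with $|f_j(t,x)-f_j(\tau,z)|\le L_{f_j,\mathcal{Z}}\|x-z\|_\infty+l_{f_j,\mathcal{Z}}|t-\tau|$ and $|f_j(t,x)|\le b_{f_j,\mathcal{Z}}$ for $x,z\in\mathcal{Z}$, $t,\tau\ge0$; $b_{f,\mathcal{Z}}=\max_jb_{f_j,\mathcal{Z}}$. The adaptive closed-loop system is $\dot x=A_mx+B_vv+B(u_a+f(t,x))$,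 $x(0)=x_0$, with the $\mathcal{L}_1$ adaptive controller: a Hurwitz $A_e\in\mathbb{R}^{n\times n}$; $B^\perp\in\mathbb{R}^{n\times(n-m)}$ with $(B^\perp)^\top B=0$ and $\mathrm{rank}[B\ B^\perp]=n$; state predictor $\dot{\hat x}=A_mx+B_vv+B(u_a+\hat\sigma_1)+B^\perp\hat\sigma_2+A_e\tilde x$, $\hat x(0)=x_0$, $\tilde x=\hat x-x$; estimation sample time $T>0$, $\Phi(T)=A_e^{-1}(e^{A_eT}-I_n)$; piecewise-constant adaptive law $[\hat\sigma_1(t);\hat\sigma_2(t)]=[\hat\sigma_1(iT);\hat\sigma_2(iT)]$ for $t\in[iT,(i+1)T)$, with $[\hat\sigma_1(iT);\hat\sigma_2(iT)]=-[B\ B^\perp]^{-1}\Phi^{-1}(T)e^{A_eT}\tilde x(iT)$, $i\in\mathbb{Z}_+$; control law $u_a(s)=-\mathcal{C}(s)\mathfrak{L}[\hat\sigma_1(t)]$ with $\mathcal{C}(s)=\mathrm{diag}(k_f^j/(s+k_f^j))$, $k_f^j>0$. Solutions are assumed to exist on $[0,\infty)$. Constants: $\bar\alpha_0(T)=\int_0^T\|e^{A_e(T-\tau)}B\|_\infty d\tau$, $\bar\alpha_1(T)=\max_{t\in[0,T]}\|e^{A_et}\|_\infty$, $\bar\alpha_2(T)=\max_{t\in[0,T]}\int_0^t\|e^{A_e(t-\tau)}\Phi^{-1}(T)e^{A_eT}\|_\infty d\tau$. *)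

theory Defs
  imports "HOL-Analysis.Analysis"
begin

definition vinf :: "real^'n \<Rightarrow> real" where
  "vinf x = Max (range (\<lambda>i. \<bar>x $ i\<bar>))"

definition minf :: "real^'c^'r \<Rightarrow> real" where
  "minf A = Sup {vinf (A *v x) | x. vinf x \<le> 1}"

primrec mpow :: "real^'n^'n \<Rightarrow> nat \<Rightarrow> real^'n^'n" where
  "mpow A 0 = mat 1"
| "mpow A (Suc k) = A ** mpow A k"

definition mexp :: "real^'n^'n \<Rightarrow> real^'n^'n" where
  "mexp A = (\<Sum>k. (1 / fact k) *\<^sub>R mpow A k)"

definition hurwitz :: "real^'n^'n \<Rightarrow> bool" where
  "hurwitz A \<longleftrightarrow> (\<forall>(l::complex) (w::complex^'n).
      w \<noteq> 0 \<longrightarrow> (\<chi> i j. complex_of_real (A $ i $ j)) *v w = l *s w \<longrightarrow> Re l < 0)"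

definition piecewise_continuous :: "(real \<Rightarrow> 'a::topological_space) \<Rightarrow> bool" where
  "piecewise_continuous v \<longleftrightarrow>
     (\<forall>a b. \<exists>S. finite S \<and> (\<forall>t\<in>{a..b} - S. isCont v t)) \<and>
     (\<forall>t. (\<exists>l. (v \<longlongrightarrow> l) (at_left t)) \<and> (\<exists>l. (v \<longlongrightarrow> l) (at_right t)))"

definition Omega :: "real \<Rightarrow> (real^'n) set" where
  "Omega \<rho> = {z. vinf z \<le> \<rho>}"

definition PhiT :: "real^'n^'n \<Rightarrow> real \<Rightarrow> real^'n^'n" where
  "PhiT Ae T = matrix_inv Ae ** (mexp (T *\<^sub>R Ae) - mat 1)"

definition alpha0 :: "real^'n^'n \<Rightarrow> real^'m^'n \<Rightarrow> real \<Rightarrow> real" where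
  "alpha0 Ae B T = integral {0..T} (\<lambda>s. minf (mexp ((T - s) *\<^sub>R Ae) ** B))"

definition alpha1 :: "real^'n^'n \<Rightarrow> real \<Rightarrow> real" where
  "alpha1 Ae T = Sup ((\<lambda>t. minf (mexp (t *\<^sub>R Ae))) ` {0..T})"

definition alpha2 :: "real^'n^'n \<Rightarrow> real \<Rightarrow> real" where
  "alpha2 Ae T = Sup ((\<lambda>t. integral {0..t}
      (\<lambda>s. minf (mexp ((t - s) *\<^sub>R Ae) ** matrix_inv (PhiT Ae T) ** mexp (T *\<^sub>R Ae)))) ` {0..T})"

end

theory Submission
  imports Defs "HOL-Computational_Algebra.Fundamental_Theorem_Algebra"
begin

text \<open>Let e be the prediction error and a = iT the last sampling instant before t. The
  adaptive estimate is constant on [a, a + T), so variation of constants gives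
  e(t) = exp((t - a) Ae) e(a) - int_a^t exp((t - s) Ae) Phi(T)^-1 exp(T Ae) e(a) ds
         - int_a^t exp((t - s) Ae) B f(s, x(s)) ds.
  For t = a + T the first two terms cancel, because int_0^T exp(s Ae) ds = Phi(T); hence
  |e| <= b_f alpha0(T) at every sampling instant. Inside a sampling period the three terms are
  bounded by alpha1(T) |e(a)|, alpha2(T) |e(a)| and b_f alpha0(T) respectively.
  Phi(T) is invertible because Ae is Hurwitz: a nonzero fixed vector of exp(T Ae) would yield
  an eigenvalue mu of Ae with exp(T mu) = 1.\<close>

section \<open>Infinity norms\<close>

lemma abs_component_le_vinf: "\<bar>x $ i\<bar> \<le> vinf x"
  unfolding vinf_def by (rule Max_ge) auto

lemma vinf_leI: "(\<And>i. \<bar>x $ i\<bar> \<le> c) \<Longrightarrow> vinf x \<le> c"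
  unfolding vinf_def by (subst Max_le_iff) auto

lemma vinf_nonneg: "0 \<le> vinf x"
  using abs_component_le_vinf[of x] abs_ge_zero order_trans by blast

lemma vinf_zero [simp]: "vinf 0 = 0"
  by (rule antisym[OF vinf_leI vinf_nonneg]) simp

lemma vinf_eq_0_iff [simp]: "vinf x = 0 \<longleftrightarrow> x = 0"
  using abs_component_le_vinf[of x] by (metis abs_le_zero_iff vec_eq_iff vinf_zero zero_index)

lemma vinf_add_le: "vinf (x + y) \<le> vinf x + vinf y"
  by (rule vinf_leI) (metis abs_triangle_ineq add_mono order_trans vector_add_component abs_component_le_vinf)

lemma vinf_minus [simp]: "vinf (- x) = vinf x"
  unfolding vinf_def by simp

lemma vinf_diff_le: "vinf (x - y) \<le> vinf x + vinf y"
  using vinf_add_le[of x "- y"] by simp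

lemma vinf_scaleR: "vinf (c *\<^sub>R x) = \<bar>c\<bar> * vinf x"
proof (rule antisym)
  show "vinf (c *\<^sub>R x) \<le> \<bar>c\<bar> * vinf x"
    by (rule vinf_leI) (simp add: abs_mult mult_left_mono abs_component_le_vinf)
  show "\<bar>c\<bar> * vinf x \<le> vinf (c *\<^sub>R x)"
  proof (cases "c = 0")
    case False
    have "vinf x \<le> vinf (c *\<^sub>R x) / \<bar>c\<bar>"
      using False abs_component_le_vinf[of "c *\<^sub>R x"]
      by (intro vinf_leI) (simp add: le_divide_eq abs_mult mult.commute)
    then show ?thesis using False by (simp add: le_divide_eq mult.commute)
  qed simp
qed

lemma vinf_le_norm: "vinf x \<le> norm x"
  by (rule vinf_leI) (rule component_le_norm_cart)

definition entry_abs_sum :: "real^'c^'r \<Rightarrow> real" where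
  "entry_abs_sum M = (\<Sum>i\<in>UNIV. \<Sum>j\<in>UNIV. \<bar>M $ i $ j\<bar>)"

lemma entry_abs_sum_nonneg: "0 \<le> entry_abs_sum M"
  unfolding entry_abs_sum_def by (simp add: sum_nonneg)

lemma row_abs_sum_le_entry_abs_sum: "(\<Sum>j\<in>UNIV. \<bar>M $ i $ j\<bar>) \<le> entry_abs_sum M"
  unfolding entry_abs_sum_def by (rule member_le_sum) (auto simp: sum_nonneg)

lemma vinf_mult_le_entry_abs_sum: "vinf (M *v x) \<le> entry_abs_sum M * vinf x"
proof (rule vinf_leI)
  fix i
  have "\<bar>(M *v x) $ i\<bar> = \<bar>\<Sum>j\<in>UNIV. M $ i $ j * x $ j\<bar>"
    by (simp add: matrix_vector_mult_def)
  also have "\<dots> \<le> (\<Sum>j\<in>UNIV. \<bar>M $ i $ j\<bar>) * vinf x"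
    by (rule order_trans[OF sum_abs])
       (auto intro!: sum_mono simp: abs_mult mult_left_mono abs_component_le_vinf sum_distrib_right)
  also have "\<dots> \<le> entry_abs_sum M * vinf x"
    by (rule mult_right_mono[OF row_abs_sum_le_entry_abs_sum vinf_nonneg])
  finally show "\<bar>(M *v x) $ i\<bar> \<le> entry_abs_sum M * vinf x" .
qed

lemma entry_abs_sum_le_norm: "entry_abs_sum (M::real^'c^'r) \<le> real CARD('r) * real CARD('c) * norm M"
proof -
  have "\<bar>M $ i $ j\<bar> \<le> norm M" for i j
    using component_le_norm_cart[of "M $ i" j] Finite_Cartesian_Product.norm_nth_le[of M i] by linarith
  then have "entry_abs_sum M \<le> (\<Sum>i\<in>(UNIV::'r set). \<Sum>j\<in>(UNIV::'c set). norm M)"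
    unfolding entry_abs_sum_def by (intro sum_mono)
  then show ?thesis by (simp add: mult.assoc)
qed

lemma norm_le_entry_abs_sum: "norm (M::real^'c^'r) \<le> entry_abs_sum M"
proof -
  have "norm M \<le> (\<Sum>i\<in>UNIV. norm (M $ i))"
    unfolding norm_vec_def by (rule L2_set_le_sum) simp
  also have "\<dots> \<le> entry_abs_sum M"
    unfolding entry_abs_sum_def by (intro sum_mono norm_le_l1_cart)
  finally show ?thesis .
qed

lemma bdd_above_minf_set: "bdd_above {vinf (M *v x) | x. vinf x \<le> 1}"
proof (rule bdd_aboveI)
  fix y assume "y \<in> {vinf (M *v x) | x. vinf x \<le> 1}"
  then obtain x where "y = vinf (M *v x)" "vinf x \<le> 1" by auto
  then show "y \<le> entry_abs_sum M"
    using vinf_mult_le_entry_abs_sum[of M x] entry_abs_sum_nonneg[of M]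
    by (metis mult_left_le order_trans vinf_nonneg)
qed

lemma minf_upper: "vinf x \<le> 1 \<Longrightarrow> vinf (M *v x) \<le> minf M"
  unfolding minf_def by (rule cSup_upper[OF _ bdd_above_minf_set]) auto

lemma minf_nonneg: "0 \<le> minf M"
  using minf_upper[of 0 M] by simp

lemma minf_least: "(\<And>x. vinf x \<le> 1 \<Longrightarrow> vinf (M *v x) \<le> c) \<Longrightarrow> minf M \<le> c"
  unfolding minf_def by (rule cSup_least) (auto intro: exI[of _ 0])

lemma minf_le_entry_abs_sum: "minf M \<le> entry_abs_sum M"
  by (rule minf_least)
     (metis mult_left_le entry_abs_sum_nonneg vinf_mult_le_entry_abs_sum order_trans vinf_nonneg)

lemma vinf_mult_le_minf: "vinf (M *v x) \<le> minf M * vinf x"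
proof (cases "x = 0")
  case False
  then have r: "vinf x > 0" using vinf_nonneg[of x] by (simp add: order_less_le)
  have "vinf (M *v ((1 / vinf x) *\<^sub>R x)) \<le> minf M"
    using r by (intro minf_upper) (simp add: vinf_scaleR)
  then have "vinf (M *v x) / vinf x \<le> minf M"
    using r by (simp add: matrix_vector_mult_scaleR vinf_scaleR)
  then show ?thesis using r by (simp add: divide_le_eq)
qed simp

lemma minf_add_le: "minf (M + N) \<le> minf M + minf N"
proof (rule minf_least)
  fix x :: "real^'a" assume x: "vinf x \<le> 1"
  have "vinf ((M + N) *v x) \<le> minf M * vinf x + minf N * vinf x"
    by (rule order_trans[OF _ add_mono[OF vinf_mult_le_minf vinf_mult_le_minf]])
       (simp add: matrix_vector_mult_add_rdistrib vinf_add_le)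
  also have "\<dots> \<le> minf M + minf N"
    using x vinf_nonneg[of x] minf_nonneg[of M] minf_nonneg[of N]
    by (intro add_mono) (auto intro: mult_left_le)
  finally show "vinf ((M + N) *v x) \<le> minf M + minf N" .
qed

lemma lipschitz_on_minf:
  "(real CARD('r) * real CARD('c))-lipschitz_on UNIV (minf :: real^'c^'r \<Rightarrow> real)"
proof (rule lipschitz_onI)
  fix M N :: "real^'c^'r"
  have "minf M \<le> minf N + minf (M - N)" "minf N \<le> minf M + minf (N - M)"
    using minf_add_le[of N "M - N"] minf_add_le[of M "N - M"] by simp_all
  moreover have "minf (M - N) \<le> real CARD('r) * real CARD('c) * dist M N"
    "minf (N - M) \<le> real CARD('r) * real CARD('c) * dist M N"
    using minf_le_entry_abs_sum[of "M - N"] entry_abs_sum_le_norm[of "M - N"]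
      minf_le_entry_abs_sum[of "N - M"] entry_abs_sum_le_norm[of "N - M"]
    by (simp_all add: dist_norm norm_minus_commute)
  ultimately show "dist (minf M) (minf N) \<le> real CARD('r) * real CARD('c) * dist M N"
    by (simp add: dist_real_def)
qed simp

lemma continuous_on_minf [continuous_intros]:
  "continuous_on S G \<Longrightarrow> continuous_on S (\<lambda>s. minf (G s :: real^'c^'r))"
  using continuous_on_compose2[OF lipschitz_on_continuous_on[OF lipschitz_on_minf] _ subset_UNIV]
  by blast


section \<open>The matrix exponential\<close>

lemma mpow_Suc_right: "mpow A (Suc k) = mpow A k ** A"
  by (induction k) (simp_all add: matrix_mul_assoc)

lemma mpow_scaleR: "mpow (t *\<^sub>R A) k = (t ^ k) *\<^sub>R mpow A k"
  by (induction k) (simp_all add: matrix_scalar_ac scalar_matrix_assoc[symmetric])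

lemma abs_mpow_entry_le: "\<bar>mpow A k $ i $ j\<bar> \<le> entry_abs_sum A ^ k"
proof (induction k arbitrary: i j)
  case (Suc k)
  have "\<bar>mpow A (Suc k) $ i $ j\<bar> = \<bar>\<Sum>l\<in>UNIV. A $ i $ l * mpow A k $ l $ j\<bar>"
    by (simp add: matrix_matrix_mult_def)
  also have "\<dots> \<le> (\<Sum>l\<in>UNIV. \<bar>A $ i $ l\<bar>) * entry_abs_sum A ^ k"
    by (rule order_trans[OF sum_abs])
       (auto intro!: sum_mono simp: abs_mult mult_left_mono Suc sum_distrib_right)
  also have "\<dots> \<le> entry_abs_sum A * entry_abs_sum A ^ k"
    by (rule mult_right_mono[OF row_abs_sum_le_entry_abs_sum]) (simp add: entry_abs_sum_nonneg)
  finally show ?case by simp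
qed (simp add: mat_def)

lemma summable_mexp: "summable (\<lambda>k. (1 / fact k) *\<^sub>R mpow (A::real^'n^'n) k)"
proof (rule summable_comparison_test')
  let ?K = "real CARD('n) * real CARD('n)"
  show "summable (\<lambda>k. ?K * (inverse (fact k) * entry_abs_sum A ^ k))"
    by (intro summable_mult summable_exp)
  fix k :: nat
  have "entry_abs_sum (mpow A k) \<le> (\<Sum>i\<in>(UNIV::'n set). \<Sum>j\<in>(UNIV::'n set). entry_abs_sum A ^ k)"
    unfolding entry_abs_sum_def[of "mpow A k"] by (intro sum_mono abs_mpow_entry_le)
  then have "norm (mpow A k) \<le> ?K * entry_abs_sum A ^ k"
    using norm_le_entry_abs_sum[of "mpow A k"] by (simp add: mult.assoc)
  then show "norm ((1 / fact k) *\<^sub>R mpow A k) \<le> ?K * (inverse (fact k) * entry_abs_sum A ^ k)"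
    by (simp add: field_simps)
qed

definition mexp_coeff :: "real^'n^'n \<Rightarrow> 'n \<Rightarrow> 'n \<Rightarrow> nat \<Rightarrow> real" where
  "mexp_coeff A i j k = mpow A k $ i $ j / fact k"

lemma mexp_scaleR_entry: "mexp (t *\<^sub>R A) $ i $ j = (\<Sum>k. mexp_coeff A i j k * t ^ k)"
proof -
  have "(\<lambda>M. M $ i $ j) (mexp (t *\<^sub>R A)) = (\<Sum>k. (\<lambda>M. M $ i $ j) ((1 / fact k) *\<^sub>R mpow (t *\<^sub>R A) k))"
    unfolding mexp_def
    by (rule bounded_linear.suminf[OF bounded_linear_compose[OF bounded_linear_vec_nth
          bounded_linear_vec_nth] summable_mexp])
  then show ?thesis by (simp add: mpow_scaleR mexp_coeff_def ac_simps)
qed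

lemma summable_mexp_coeff: "summable (\<lambda>k. mexp_coeff A i j k * t ^ k)"
proof (rule summable_comparison_test')
  show "summable (\<lambda>k. inverse (fact k) * (entry_abs_sum A * \<bar>t\<bar>) ^ k)" by (rule summable_exp)
  fix k :: nat
  have "norm (mexp_coeff A i j k * t ^ k) \<le> entry_abs_sum A ^ k * \<bar>t\<bar> ^ k / fact k"
    by (simp add: mexp_coeff_def abs_mult power_abs divide_right_mono mult_right_mono abs_mpow_entry_le)
  then show "norm (mexp_coeff A i j k * t ^ k) \<le> inverse (fact k) * (entry_abs_sum A * \<bar>t\<bar>) ^ k"
    by (simp add: field_simps power_mult_distrib)
qed

lemma diffs_mexp_coeff: "diffs (mexp_coeff A i j) k = mpow A (Suc k) $ i $ j / fact k"
proof -
  have "fact (Suc k) = real (Suc k) * fact k" by (simp only: fact_Suc)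
  then show ?thesis by (simp add: diffs_def mexp_coeff_def del: mpow.simps of_nat_Suc fact_Suc)
qed

lemma mexp_scaleR_matrix_mul_eq:
  "mexp (t *\<^sub>R A) ** A = (\<chi> i j. \<Sum>k. diffs (mexp_coeff A i j) k * t ^ k)"
proof -
  have "(mexp (t *\<^sub>R A) ** A) $ i $ j = (\<Sum>l\<in>UNIV. \<Sum>k. mexp_coeff A i l k * t ^ k * A $ l $ j)"
    for i j by (simp add: matrix_matrix_mult_def mexp_scaleR_entry suminf_mult2 summable_mexp_coeff)
  also have "\<dots> i j = (\<Sum>k. \<Sum>l\<in>UNIV. mexp_coeff A i l k * t ^ k * A $ l $ j)" for i j
    by (rule suminf_sum[symmetric]) (intro summable_mult2 summable_mexp_coeff)
  also have "\<dots> i j = (\<Sum>k. (mpow A k ** A) $ i $ j / fact k * t ^ k)" for i j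
    by (simp add: mexp_coeff_def matrix_matrix_mult_def sum_distrib_right sum_distrib_left
        sum_divide_distrib mult_ac del: mpow.simps)
  finally show ?thesis
    by (simp add: vec_eq_iff diffs_mexp_coeff mpow_Suc_right del: mpow.simps)
qed

lemma matrix_mul_mexp_scaleR_eq:
  "A ** mexp (t *\<^sub>R A) = (\<chi> i j. \<Sum>k. diffs (mexp_coeff A i j) k * t ^ k)"
proof -
  have "(A ** mexp (t *\<^sub>R A)) $ i $ j = (\<Sum>l\<in>UNIV. \<Sum>k. A $ i $ l * (mexp_coeff A l j k * t ^ k))"
    for i j by (simp add: matrix_matrix_mult_def mexp_scaleR_entry suminf_mult summable_mexp_coeff)
  also have "\<dots> i j = (\<Sum>k. \<Sum>l\<in>UNIV. A $ i $ l * (mexp_coeff A l j k * t ^ k))" for i j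
    by (rule suminf_sum[symmetric]) (intro summable_mult summable_mexp_coeff)
  also have "\<dots> i j = (\<Sum>k. mpow A (Suc k) $ i $ j / fact k * t ^ k)" for i j
    by (simp add: mexp_coeff_def matrix_matrix_mult_def sum_distrib_right sum_divide_distrib mult.assoc)
  finally show ?thesis by (simp add: vec_eq_iff diffs_mexp_coeff)
qed

lemma mexp_scaleR_commute: "mexp (t *\<^sub>R A) ** A = A ** mexp (t *\<^sub>R A)"
  by (simp add: mexp_scaleR_matrix_mul_eq matrix_mul_mexp_scaleR_eq)

lemma mexp_zero [simp]: "mexp 0 = mat 1"
proof -
  have "mexp (0 *\<^sub>R A) $ i $ j = mat 1 $ i $ j" for A :: "real^'n^'n" and i j
    unfolding mexp_scaleR_entry using powser_zero[of "mexp_coeff A i j"] by (simp add: mexp_coeff_def)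
  then show ?thesis by (metis scaleR_zero_left vec_eq_iff)
qed

lemma has_vector_derivative_componentwise:
  fixes f :: "real \<Rightarrow> 'a::real_normed_vector^'n"
  assumes "\<And>i. ((\<lambda>t. f t $ i) has_vector_derivative (f' $ i)) (at x within S)"
  shows "(f has_vector_derivative f') (at x within S)"
proof -
  let ?q = "\<lambda>y i. (1 / norm (y - x)) *\<^sub>R ((f y $ i) - (f x $ i + (y - x) *\<^sub>R f' $ i))"
  have "((\<lambda>y. \<chi> i. ?q y i) \<longlongrightarrow> (\<chi> i. 0)) (at x within S)"
    using assms unfolding has_vector_derivative_def has_derivative_within
    by (intro tendsto_vec_lambda) simp
  moreover have "(\<lambda>y. \<chi> i. ?q y i) = (\<lambda>y. (1 / norm (y - x)) *\<^sub>R (f y - (f x + (y - x) *\<^sub>R f')))"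
    by (rule ext) (simp add: vec_eq_iff)
  ultimately show ?thesis
    unfolding has_vector_derivative_def has_derivative_within
    by (simp add: bounded_linear_scaleR_left zero_vec_def)
qed

lemma has_vector_derivative_mexp_scaleR:
  "((\<lambda>t. mexp (t *\<^sub>R A)) has_vector_derivative (A ** mexp (t *\<^sub>R A))) (at t within S)"
proof -
  have "((\<lambda>t. mexp (t *\<^sub>R A) $ i $ j) has_field_derivative
          (\<Sum>k. diffs (mexp_coeff A i j) k * t ^ k)) (at t)" for i j
    unfolding mexp_scaleR_entry
    by (rule termdiffs_strong_converges_everywhere) (rule summable_mexp_coeff)
  then show ?thesis unfolding matrix_mul_mexp_scaleR_eq
    by (intro has_vector_derivative_componentwise)
       (simp add: has_real_derivative_iff_has_vector_derivative has_vector_derivative_at_within)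
qed

lemma continuous_on_mexp_scaleR: "continuous_on S (\<lambda>t. mexp (t *\<^sub>R A))"
  unfolding continuous_on_eq_continuous_within
  using has_vector_derivative_continuous[OF has_vector_derivative_mexp_scaleR] by blast


section \<open>Hurwitz matrices\<close>

definition of_real_mat :: "real^'n^'n \<Rightarrow> complex^'n^'n" where
  "of_real_mat M = (\<chi> i j. complex_of_real (M $ i $ j))"

definition of_real_vec :: "real^'n \<Rightarrow> complex^'n" where
  "of_real_vec w = (\<chi> i. complex_of_real (w $ i))"

lemma of_real_mat_mult: "of_real_mat (M ** N) = of_real_mat M ** of_real_mat N"
  by (simp add: vec_eq_iff of_real_mat_def matrix_matrix_mult_def)

lemma of_real_mat_vector_mult: "of_real_mat M *v of_real_vec w = of_real_vec (M *v w)"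
  by (simp add: vec_eq_iff of_real_mat_def of_real_vec_def matrix_vector_mult_def)

lemma of_real_vec_eq_0_iff [simp]: "of_real_vec w = 0 \<longleftrightarrow> w = 0"
  by (simp add: vec_eq_iff of_real_vec_def)

lemma hurwitz_eigenvalue_Re_neg:
  "hurwitz A \<Longrightarrow> u \<noteq> 0 \<Longrightarrow> of_real_mat A *v u = l *s u \<Longrightarrow> Re l < 0"
  unfolding hurwitz_def of_real_mat_def by blast

lemma invertible_if_kernel_trivial: "(\<And>x. (M::real^'n^'n) *v x = 0 \<Longrightarrow> x = 0) \<Longrightarrow> invertible M"
  using matrix_left_invertible_ker[of M] invertible_left_inverse[of M] by blast

lemma hurwitz_imp_invertible:
  assumes "hurwitz A"
  shows "invertible A"
proof -
  have "w = 0" if "A *v w = 0" for w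
  proof (rule ccontr)
    assume "w \<noteq> 0"
    have "of_real_mat A *v of_real_vec w = of_real_vec 0"
      using that by (simp add: of_real_mat_vector_mult)
    then have "of_real_mat A *v of_real_vec w = 0 *s of_real_vec w"
      by (simp add: vec_eq_iff of_real_vec_def)
    then have "Re (0::complex) < 0"
      using hurwitz_eigenvalue_Re_neg[OF assms] \<open>w \<noteq> 0\<close> of_real_vec_eq_0_iff by blast
    then show False by simp
  qed
  then show ?thesis by (rule invertible_if_kernel_trivial)
qed

text \<open>An eigenvector of \<open>C\<close> in the cyclic subspace of \<open>v\<close> is found by factoring a polynomial
  \<open>p\<close> with \<open>p(C) v = 0\<close> into linear factors.\<close>

definition krylov :: "complex^'n^'n \<Rightarrow> nat \<Rightarrow> complex^'n \<Rightarrow> complex^'n" where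
  "krylov C k v = ((*v) C ^^ k) v"

lemma krylov_0 [simp]: "krylov C 0 v = v"
  by (simp add: krylov_def)

lemma krylov_Suc: "krylov C (Suc k) v = C *v krylov C k v"
  by (simp add: krylov_def)

definition poly_mv :: "complex^'n^'n \<Rightarrow> complex poly \<Rightarrow> complex^'n \<Rightarrow> complex^'n" where
  "poly_mv C p v = (\<Sum>k\<le>degree p. coeff p k *s krylov C k v)"

lemma poly_mv_upto: "degree p \<le> N \<Longrightarrow> poly_mv C p v = (\<Sum>k\<le>N. coeff p k *s krylov C k v)"
  unfolding poly_mv_def by (rule sum.mono_neutral_left) (auto simp: coeff_eq_0)

lemma poly_mv_linear_factor: "poly_mv C ([:-\<mu>, 1:] * q) v = C *v poly_mv C q v - \<mu> *s poly_mv C q v"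
proof -
  let ?N = "Suc (degree q)"
  have d: "degree ([:-\<mu>, 1:] * q) \<le> ?N"
    using degree_mult_le[of "[:-\<mu>, 1:]" q] by simp
  have split: "[:-\<mu>, 1:] * q = smult (-\<mu>) q + pCons 0 q" by simp
  have "poly_mv C ([:-\<mu>, 1:] * q) v = (\<Sum>k\<le>?N. coeff ([:-\<mu>, 1:] * q) k *s krylov C k v)"
    by (rule poly_mv_upto[OF d])
  also have "\<dots> = (\<Sum>k\<le>?N. (-\<mu>) *s (coeff q k *s krylov C k v))
        + (\<Sum>k\<le>?N. coeff (pCons 0 q) k *s krylov C k v)"
    unfolding split
    by (simp add: vec.scale_left_distrib sum.distrib vec.scale_scale) (simp add: sum_subtractf sum_negf)
  also have "(\<Sum>k\<le>?N. (-\<mu>) *s (coeff q k *s krylov C k v)) = (-\<mu>) *s poly_mv C q v"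
    by (simp add: poly_mv_upto[of q ?N] vec.scale_sum_right)
  also have "(\<Sum>k\<le>?N. coeff (pCons 0 q) k *s krylov C k v) = C *v poly_mv C q v"
    by (simp only: sum.atMost_Suc_shift) (simp add: poly_mv_def vec.sum vector_scalar_commute krylov_Suc)
  finally show ?thesis by (simp add: vec.scale_minus_left)
qed

lemma poly_mv_commute:
  assumes "\<And>y. E *v (C *v y) = C *v (E *v y)"
  shows "E *v poly_mv C q v = poly_mv C q (E *v v)"
proof -
  have "E *v krylov C k v = krylov C k (E *v v)" for k
    by (induction k) (simp_all add: assms krylov_Suc)
  then show ?thesis by (simp add: poly_mv_def vec.sum vector_scalar_commute)
qed

lemma ex_nonzero_poly_mv_eq_0: "\<exists>p. p \<noteq> 0 \<and> poly_mv C p v = 0" for C :: "complex^'n^'n"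
proof (cases "inj_on (\<lambda>k. krylov C k v) {..CARD('n)}")
  case True
  let ?S = "(\<lambda>k. krylov C k v) ` {..CARD('n)}"
  have "vec.dependent ?S"
  proof (rule ccontr)
    assume "\<not> vec.dependent ?S"
    then have "card ?S \<le> vec.dim ?S" using vec.independent_bound_general by blast
    also have "\<dots> \<le> vec.dim (UNIV :: (complex^'n) set)" by (rule vec.dim_subset) simp
    finally show False using card_image[OF True] by (simp add: vec.dim_UNIV card_cart_basis)
  qed
  then obtain u where u: "\<exists>x\<in>?S. u x \<noteq> 0" "(\<Sum>x\<in>?S. u x *s x) = 0"
    using vec.dependent_finite[of ?S] by auto
  define p where "p = (\<Sum>k\<le>CARD('n). monom (u (krylov C k v)) k)"
  have cp: "coeff p k = (if k \<le> CARD('n) then u (krylov C k v) else 0)" for k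
    unfolding p_def by (simp add: coeff_sum coeff_monom)
  have dp: "degree p \<le> CARD('n)" unfolding p_def
    by (intro degree_sum_le) (auto intro: order_trans[OF degree_monom_le])
  have "poly_mv C p v = (\<Sum>k\<le>CARD('n). u (krylov C k v) *s krylov C k v)"
    by (simp add: poly_mv_upto[OF dp] cp)
  also have "\<dots> = 0" using u(2) by (simp add: sum.reindex[OF True])
  finally have "poly_mv C p v = 0" .
  moreover from u(1) obtain k where "k \<le> CARD('n)" "u (krylov C k v) \<noteq> 0" by auto
  then have "p \<noteq> 0" using cp[of k] by auto
  ultimately show ?thesis by blast
next
  case False
  then obtain i j where ij: "i \<le> CARD('n)" "j \<le> CARD('n)" "i \<noteq> j" "krylov C i v = krylov C j v"
    by (auto simp: inj_on_def)
  define p where "p = monom (1::complex) i - monom 1 j"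
  have dp: "degree p \<le> CARD('n)" unfolding p_def
    by (intro degree_diff_le order_trans[OF degree_monom_le] ij)
  have "coeff p k *s krylov C k v
      = (if i = k then krylov C k v else 0) - (if j = k then krylov C k v else 0)" for k
    by (simp add: p_def coeff_monom vec.scale_left_diff_distrib)
  then have "poly_mv C p v = krylov C i v - krylov C j v"
    by (simp add: poly_mv_upto[OF dp] sum_subtractf ij)
  moreover have "coeff p i \<noteq> 0" using ij by (simp add: p_def coeff_monom)
  then have "p \<noteq> 0" by auto
  ultimately show ?thesis using ij(4) by auto
qed

lemma ex_eigenvector_poly_mv:
  "p \<noteq> 0 \<Longrightarrow> poly_mv C p v = 0 \<Longrightarrow> v \<noteq> 0 \<Longrightarrow>
    \<exists>q \<mu>. poly_mv C q v \<noteq> 0 \<and> C *v poly_mv C q v = \<mu> *s poly_mv C q v"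
proof (induction "degree p" arbitrary: p rule: less_induct)
  case less
  show ?case
  proof (cases "degree p = 0")
    case True
    then obtain c where "p = [:c:]" by (metis degree_eq_zeroE)
    then show ?thesis using less.prems by (simp add: poly_mv_def vec.scale_eq_0_iff)
  next
    case False
    then have "\<not> constant (poly p)" by (simp add: constant_degree)
    then obtain \<mu> where "poly p \<mu> = 0" using fundamental_theorem_of_algebra by blast
    then obtain q where pq: "p = [:-\<mu>, 1:] * q" using poly_eq_0_iff_dvd by (metis dvdE)
    with less.prems have q0: "q \<noteq> 0" by auto
    then have "degree q < degree p" using pq degree_mult_eq[of "[:-\<mu>, 1:]" q] by simp
    moreover have "C *v poly_mv C q v - \<mu> *s poly_mv C q v = 0"
      using less.prems pq poly_mv_linear_factor by metis
    ultimately show ?thesis using less.hyps[OF _ q0 _ less.prems(3)] by force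
  qed
qed

lemma of_real_mat_mpow_eigen:
  "of_real_mat A *v u = \<mu> *s u \<Longrightarrow> of_real_mat (mpow A k) *v u = (\<mu> ^ k) *s u"
  for A :: "real^'n^'n"
proof (induction k)
  case 0
  have "of_real_mat (mat 1 :: real^'n^'n) = mat 1" by (simp add: of_real_mat_def mat_def vec_eq_iff)
  then show ?case by (simp add: matrix_vector_mul_lid)
next
  case (Suc k)
  then show ?case
    by (simp add: of_real_mat_mult matrix_vector_mul_assoc[symmetric] vector_scalar_commute
        vec.scale_scale mult.commute)
qed

lemma of_real_mat_mexp_eigen:
  assumes "of_real_mat A *v u = \<mu> *s u"
  shows "of_real_mat (mexp (T *\<^sub>R A)) *v u = exp (complex_of_real T * \<mu>) *s u"
proof -
  have "(of_real_mat (mexp (T *\<^sub>R A)) *v u) $ i = exp (complex_of_real T * \<mu>) * u $ i" for i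
  proof -
    let ?c = "\<lambda>j k. complex_of_real (mexp_coeff A i j k * T ^ k)"
    have "(of_real_mat (mexp (T *\<^sub>R A)) *v u) $ i
        = (\<Sum>j\<in>UNIV. complex_of_real (\<Sum>k. mexp_coeff A i j k * T ^ k) * u $ j)"
      by (simp add: of_real_mat_def matrix_vector_mult_def mexp_scaleR_entry)
    also have "\<dots> = (\<Sum>j\<in>UNIV. \<Sum>k. ?c j k * u $ j)"
      by (intro sum.cong refl)
         (simp only: suminf_of_real[OF summable_mexp_coeff]
           suminf_mult2[OF summable_of_real[OF summable_mexp_coeff]])
    also have "\<dots> = (\<Sum>k. \<Sum>j\<in>UNIV. ?c j k * u $ j)"
      by (rule suminf_sum[symmetric]) (intro summable_mult2 summable_of_real summable_mexp_coeff)
    also have "\<dots> = (\<Sum>k. (complex_of_real T * \<mu>) ^ k /\<^sub>R fact k * u $ i)"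
    proof (rule arg_cong[where f=suminf], rule ext)
      fix k
      have "(\<Sum>j\<in>UNIV. ?c j k * u $ j) = complex_of_real (T ^ k / fact k) * (of_real_mat (mpow A k) *v u) $ i"
        by (simp add: mexp_coeff_def of_real_mat_def matrix_vector_mult_def sum_distrib_left mult_ac)
      then show "(\<Sum>j\<in>UNIV. ?c j k * u $ j) = (complex_of_real T * \<mu>) ^ k /\<^sub>R fact k * u $ i"
        using of_real_mat_mpow_eigen[OF assms, of k]
        by (simp add: scaleR_conv_of_real power_mult_distrib divide_inverse mult_ac)
    qed
    also have "\<dots> = exp (complex_of_real T * \<mu>) * u $ i"
      unfolding exp_def by (rule suminf_mult2[symmetric]) (rule summable_exp_generic)
    finally show ?thesis .
  qed
  then show ?thesis by (simp add: vec_eq_iff)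
qed

text \<open>The fixed space of \<open>exp(T A)\<close> is invariant under \<open>A\<close>, so a nonzero fixed vector would yield an
  eigenvector \<open>u\<close> of \<open>A\<close> with \<open>exp(T \<mu>) = 1\<close>, which is impossible when \<open>Re \<mu> < 0\<close>.\<close>

lemma hurwitz_mexp_fixed_point_eq_0:
  assumes h: "hurwitz A" and T: "T > 0" and fixed: "mexp (T *\<^sub>R A) *v w = w"
  shows "w = 0"
proof (rule ccontr)
  assume "w \<noteq> 0"
  define C where "C = of_real_mat A"
  define E where "E = of_real_mat (mexp (T *\<^sub>R A))"
  have Ew: "E *v of_real_vec w = of_real_vec w"
    using fixed by (simp add: E_def of_real_mat_vector_mult)
  have comm: "E *v (C *v y) = C *v (E *v y)" for y
    by (simp add: E_def C_def matrix_vector_mul_assoc of_real_mat_mult[symmetric] mexp_scaleR_commute)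
  obtain p where "p \<noteq> 0" "poly_mv C p (of_real_vec w) = 0" using ex_nonzero_poly_mv_eq_0 by blast
  moreover have "of_real_vec w \<noteq> 0" using \<open>w \<noteq> 0\<close> by simp
  ultimately obtain q \<mu> where q: "poly_mv C q (of_real_vec w) \<noteq> 0"
    "C *v poly_mv C q (of_real_vec w) = \<mu> *s poly_mv C q (of_real_vec w)"
    using ex_eigenvector_poly_mv by blast
  define u where "u = poly_mv C q (of_real_vec w)"
  have "u = E *v u" using poly_mv_commute[OF comm] Ew by (simp add: u_def)
  also have "E *v u = exp (complex_of_real T * \<mu>) *s u"
    unfolding E_def u_def by (rule of_real_mat_mexp_eigen) (use q in \<open>simp add: C_def\<close>)
  finally have "(exp (complex_of_real T * \<mu>) - 1) *s u = 0"
    by (simp add: vec.scale_left_diff_distrib)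
  then have "exp (complex_of_real T * \<mu>) = 1"
    using q(1) unfolding u_def vec.scale_eq_0_iff by simp
  moreover have "Re \<mu> < 0" using hurwitz_eigenvalue_Re_neg[OF h q(1)] q(2) by (simp add: C_def)
  then have "norm (exp (complex_of_real T * \<mu>)) < 1"
    using T by (simp add: norm_exp_eq_Re mult_pos_neg)
  ultimately show False by simp
qed

lemma matrix_inv_inverse:
  "invertible M \<Longrightarrow> M ** matrix_inv M = mat 1 \<and> matrix_inv M ** M = mat 1"
  unfolding invertible_def matrix_inv_def by (rule someI_ex)

lemma invertible_PhiT:
  assumes "hurwitz A" "T > 0"
  shows "invertible (PhiT A T)"
proof -
  have "invertible (mexp (T *\<^sub>R A) - mat 1)"
    using hurwitz_mexp_fixed_point_eq_0[OF assms]
    by (intro invertible_if_kernel_trivial) (simp add: matrix_vector_mult_diff_rdistrib)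
  moreover have "invertible (matrix_inv A)"
    using matrix_inv_inverse[OF hurwitz_imp_invertible[OF assms(1)]] invertible_def by blast
  ultimately show ?thesis unfolding PhiT_def by (rule invertible_mult[rotated])
qed


section \<open>Integral estimates\<close>

lemma bounded_bilinear_matrix_vector_mult: "bounded_bilinear (\<lambda>(M::real^'c^'r) v. M *v v)"
proof -
  have "linear (\<lambda>M::real^'c^'r. M *v v)" for v :: "real^'c"
    by (rule linearI) (simp_all add: matrix_vector_mult_add_rdistrib scaleR_matrix_vector_assoc)
  then have "bilinear (\<lambda>(M::real^'c^'r) v. M *v v)"
    unfolding bilinear_def using matrix_vector_mul_linear by blast
  then show ?thesis using bilinear_conv_bounded_bilinear by blast
qed

lemma matrix_vector_mult_uminus_left [simp]: "(- M) *v x = - (M *v x)" for M :: "real^'c^'r"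
  by (simp add: vec_eq_iff matrix_vector_mult_def flip: sum_negf)

lemma matrix_vector_mult_uminus_right [simp]: "M *v (- x) = - (M *v x)" for M :: "real^'c^'r"
  by (simp add: vec_eq_iff matrix_vector_mult_def flip: sum_negf)

lemma continuous_on_matrix_vector_mult [continuous_intros]:
  "continuous_on S P \<Longrightarrow> continuous_on S y \<Longrightarrow> continuous_on S (\<lambda>s. (P s::real^'c^'r) *v y s)"
  by (rule bounded_bilinear.continuous_on[OF bounded_bilinear_matrix_vector_mult])

lemma bounded_linear_matrix_mult_left: "bounded_linear (\<lambda>M::real^'c^'k. (A::real^'k^'r) ** M)"
proof -
  have "linear (\<lambda>M::real^'c^'k. A ** M)"
    by (rule linearI) (simp_all add: matrix_add_ldistrib matrix_scalar_ac scalar_matrix_assoc)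
  then show ?thesis using linear_conv_bounded_linear by blast
qed

lemma continuous_on_matrix_mult_right [continuous_intros]:
  "continuous_on S P \<Longrightarrow> continuous_on S (\<lambda>s. (P s::real^'k^'r) ** (Q::real^'c^'k))"
proof -
  have "linear (\<lambda>M::real^'k^'r. M ** Q)"
    by (rule linearI)
       (simp_all add: vec_eq_iff matrix_matrix_mult_def sum.distrib distrib_right sum_distrib_left mult.assoc)
  then show "continuous_on S P \<Longrightarrow> continuous_on S (\<lambda>s. P s ** Q)"
    using continuous_on_compose2[OF linear_continuous_on[OF linear_conv_bounded_linear[THEN iffD1]]]
    by blast
qed

lemma continuous_on_mexp [continuous_intros]:
  "continuous_on S f \<Longrightarrow> continuous_on S (\<lambda>s. mexp (f s *\<^sub>R A))"
  using continuous_on_compose2[OF continuous_on_mexp_scaleR[of UNIV A]] by blast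

lemma vinf_integral_le:
  fixes h :: "real \<Rightarrow> real^'n"
  assumes "continuous_on {a..b} h" "g integrable_on {a..b}" "\<And>s. s \<in> {a..b} \<Longrightarrow> vinf (h s) \<le> g s"
  shows "vinf (integral {a..b} h) \<le> integral {a..b} g"
proof (rule vinf_leI)
  fix i
  have ci: "continuous_on {a..b} (\<lambda>s. h s $ i)" by (intro continuous_on_component assms(1))
  have "integral {a..b} h $ i = integral {a..b} (\<lambda>s. h s $ i)"
    using integral_component_eq_cart[OF integrable_continuous_real[OF assms(1)]] by simp
  also have "\<bar>\<dots>\<bar> \<le> integral {a..b} g"
    using integral_norm_bound_integral[OF integrable_continuous_real[OF ci] assms(2)]
      assms(3) abs_component_le_vinf order_trans by (metis real_norm_def)
  finally show "\<bar>integral {a..b} h $ i\<bar> \<le> integral {a..b} g" .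
qed

lemma integral_Icc_reflect:
  fixes h :: "real \<Rightarrow> 'a::euclidean_space"
  shows "integral {a..t} (\<lambda>s. h (t - s)) = integral {0..t - a} h"
proof -
  define c where "c = t - a"
  have "integral {a - a..t - a} (\<lambda>x. (\<lambda>s. h (t - s)) (x + a)) = integral {a..t} (\<lambda>s. h (t - s))"
    by (rule integral_shift_real_ivl)
  then have "integral {a..t} (\<lambda>s. h (t - s)) = integral {0..c} (\<lambda>s. h (c - s))"
    by (simp add: c_def algebra_simps)
  also have "\<dots> = integral {-c + c..0 + c} (\<lambda>x. (\<lambda>u. h (- u)) (x + - c))"
    by simp
  also have "\<dots> = integral {-c..0} (\<lambda>u. h (- u))"
    using integral_shift_real_ivl[of "-c" "-c" 0 "\<lambda>u. h (- u)"] by simp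
  also have "\<dots> = integral {0..c} h"
    using Henstock_Kurzweil_Integration.integral_reflect_real[where a=0 and b=c and f=h] by simp
  finally show ?thesis by (simp add: c_def)
qed

lemma integral_Icc_mono_upper:
  fixes g :: "real \<Rightarrow> real"
  assumes "continuous_on {a..b} g" "\<And>s. s \<in> {a..b} \<Longrightarrow> 0 \<le> g s" "a \<le> c" "c \<le> b"
  shows "integral {a..c} g \<le> integral {a..b} g"
proof -
  have "integral {a..c} g + integral {c..b} g = integral {a..b} g"
    using assms by (intro Henstock_Kurzweil_Integration.integral_combine integrable_continuous_real) auto
  moreover have "0 \<le> integral {c..b} g"
    using assms by (intro integral_nonneg integrable_continuous_real) (auto elim: continuous_on_subset)
  ultimately show ?thesis by linarith
qed

lemma integral_mexp_scaleR:
  fixes A :: "real^'n^'n"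
  assumes "invertible A" "0 \<le> T"
  shows "integral {0..T} (\<lambda>u. mexp (u *\<^sub>R A)) = matrix_inv A ** (mexp (T *\<^sub>R A) - mat 1)"
proof -
  have "((\<lambda>u. A ** mexp (u *\<^sub>R A)) has_integral mexp (T *\<^sub>R A) - mat 1) {0..T}"
    using fundamental_theorem_of_calculus[OF assms(2) has_vector_derivative_mexp_scaleR] by simp
  moreover have "((\<lambda>u. A ** mexp (u *\<^sub>R A)) has_integral A ** integral {0..T} (\<lambda>u. mexp (u *\<^sub>R A))) {0..T}"
    using has_integral_linear[OF integrable_integral[OF integrable_continuous_real[OF
          continuous_on_mexp_scaleR]] bounded_linear_matrix_mult_left]
    by (simp add: o_def)
  ultimately have "A ** integral {0..T} (\<lambda>u. mexp (u *\<^sub>R A)) = mexp (T *\<^sub>R A) - mat 1"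
    using has_integral_unique by blast
  moreover have "matrix_inv A ** (A ** X) = X" for X :: "real^'n^'n"
    using matrix_inv_inverse[OF assms(1)] by (simp add: matrix_mul_assoc)
  ultimately show ?thesis by metis
qed

lemma variation_of_constants:
  fixes A :: "real^'n^'n" and e h :: "real \<Rightarrow> real^'n"
  assumes "a \<le> t" and cont: "continuous_on {a..t} e" "continuous_on {a..t} h"
    and e_eq: "\<And>u. u \<in> {a..t} \<Longrightarrow> e u = e a + integral {a..u} (\<lambda>s. A *v e s + h s)"
  shows "e t = mexp ((t - a) *\<^sub>R A) *v e a + integral {a..t} (\<lambda>s. mexp ((t - s) *\<^sub>R A) *v h s)"
proof -
  let ?E = "\<lambda>s. mexp ((t - s) *\<^sub>R A)"
  have de: "(e has_vector_derivative A *v e s + h s) (at s within {a..t})" if s: "s \<in> {a..t}" for s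
  proof -
    have "continuous_on {a..t} (\<lambda>s. A *v e s + h s)"
      using cont by (intro continuous_intros)
    from has_vector_derivative_add[OF has_vector_derivative_const integral_has_vector_derivative[OF this s]]
    have d: "((\<lambda>u. e a + integral {a..u} (\<lambda>s. A *v e s + h s)) has_vector_derivative A *v e s + h s)
        (at s within {a..t})"
      by simp
    show ?thesis by (rule has_vector_derivative_transform[OF s _ d]) (rule e_eq)
  qed
  have "((\<lambda>s. t - s) has_vector_derivative -1) (at s within {a..t})" for s
    using has_vector_derivative_diff[OF has_vector_derivative_const has_vector_derivative_id] by simp
  from vector_diff_chain_within[OF this has_vector_derivative_mexp_scaleR]
  have dE: "(?E has_vector_derivative - (A ** ?E s)) (at s within {a..t})" for s
    by (simp add: o_def)
  have "((\<lambda>s. ?E s *v e s) has_vector_derivative ?E s *v h s) (at s within {a..t})"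
    if "s \<in> {a..t}" for s
  proof -
    have "?E s *v (A *v e s) = (A ** ?E s) *v e s"
      by (simp add: matrix_vector_mul_assoc mexp_scaleR_commute)
    then have "?E s *v (A *v e s + h s) + (- (A ** ?E s)) *v e s = ?E s *v h s"
      by (simp add: matrix_vector_right_distrib)
    with bounded_bilinear.has_vector_derivative[OF bounded_bilinear_matrix_vector_mult dE de[OF that]]
    show ?thesis by simp
  qed
  from fundamental_theorem_of_calculus[OF \<open>a \<le> t\<close> this]
  have "((\<lambda>s. ?E s *v h s) has_integral e t - ?E a *v e a) {a..t}"
    by simp
  then show ?thesis by (simp add: integral_unique)
qed

lemma vinf_integral_mexp_le:
  fixes A :: "real^'n^'n" and M :: "real^'m^'n" and w :: "real \<Rightarrow> real^'m"
  assumes "continuous_on {a..t} w" "\<And>s. s \<in> {a..t} \<Longrightarrow> vinf (w s) \<le> c"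
  shows "vinf (integral {a..t} (\<lambda>s. mexp ((t - s) *\<^sub>R A) *v (M *v w s)))
    \<le> integral {0..t - a} (\<lambda>s. minf (mexp (s *\<^sub>R A) ** M)) * c"
proof -
  let ?g = "\<lambda>s. minf (mexp (s *\<^sub>R A) ** M)"
  have "vinf (integral {a..t} (\<lambda>s. mexp ((t - s) *\<^sub>R A) *v (M *v w s))) \<le> integral {a..t} (\<lambda>s. ?g (t - s) * c)"
  proof (rule vinf_integral_le)
    show "continuous_on {a..t} (\<lambda>s. mexp ((t - s) *\<^sub>R A) *v (M *v w s))"
      using assms(1) by (intro continuous_intros)
    show "(\<lambda>s. ?g (t - s) * c) integrable_on {a..t}"
      by (intro integrable_continuous_real continuous_intros)
    fix s assume "s \<in> {a..t}"
    have "vinf (mexp ((t - s) *\<^sub>R A) *v (M *v w s)) \<le> ?g (t - s) * vinf (w s)"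
      by (simp add: matrix_vector_mul_assoc vinf_mult_le_minf)
    also have "\<dots> \<le> ?g (t - s) * c"
      using assms(2)[OF \<open>s \<in> {a..t}\<close>] by (intro mult_left_mono minf_nonneg)
    finally show "vinf (mexp ((t - s) *\<^sub>R A) *v (M *v w s)) \<le> ?g (t - s) * c" .
  qed
  also have "integral {a..t} (\<lambda>s. ?g (t - s) * c) = integral {0..t - a} ?g * c"
    using integral_Icc_reflect[of a t ?g] by simp
  finally show ?thesis .
qed

lemma alpha0_eq_integral: "alpha0 Ae B T = integral {0..T} (\<lambda>s. minf (mexp (s *\<^sub>R Ae) ** B))"
  unfolding alpha0_def using integral_Icc_reflect[of 0 T "\<lambda>s. minf (mexp (s *\<^sub>R Ae) ** B)"] by simp

lemma integral_le_alpha0: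
  "0 \<le> w \<Longrightarrow> w \<le> T \<Longrightarrow> integral {0..w} (\<lambda>s. minf (mexp (s *\<^sub>R Ae) ** B)) \<le> alpha0 Ae B T"
  unfolding alpha0_eq_integral by (intro integral_Icc_mono_upper continuous_intros minf_nonneg)

lemma alpha0_nonneg: "0 \<le> T \<Longrightarrow> 0 \<le> alpha0 Ae B T"
  using integral_le_alpha0[of 0 T Ae B] by simp

lemma minf_mexp_le_alpha1: "w \<in> {0..T} \<Longrightarrow> minf (mexp (w *\<^sub>R Ae)) \<le> alpha1 Ae T"
  unfolding alpha1_def
  by (intro cSup_upper imageI bounded_imp_bdd_above compact_imp_bounded compact_continuous_image
      compact_Icc continuous_intros)

lemma alpha1_nonneg: "0 \<le> T \<Longrightarrow> 0 \<le> alpha1 Ae T"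
  using minf_mexp_le_alpha1[of 0 T Ae] minf_nonneg[of "mexp (0 *\<^sub>R Ae)"] by simp

definition adaptation_gain :: "real^'n^'n \<Rightarrow> real \<Rightarrow> real^'n^'n" where
  "adaptation_gain Ae T = matrix_inv (PhiT Ae T) ** mexp (T *\<^sub>R Ae)"

lemma integral_le_alpha2:
  assumes "w \<in> {0..T}"
  shows "integral {0..w} (\<lambda>s. minf (mexp (s *\<^sub>R Ae) ** adaptation_gain Ae T)) \<le> alpha2 Ae T"
proof -
  let ?g = "\<lambda>s. minf (mexp (s *\<^sub>R Ae) ** adaptation_gain Ae T)"
  have alpha2_eq: "alpha2 Ae T = Sup ((\<lambda>t. integral {0..t} ?g) ` {0..T})"
    unfolding alpha2_def adaptation_gain_def
    using integral_Icc_reflect[of 0 _ ?g] by (simp add: matrix_mul_assoc adaptation_gain_def)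
  have "integral {0..t} ?g \<le> integral {0..T} ?g" if "t \<in> {0..T}" for t
    using that by (intro integral_Icc_mono_upper continuous_intros minf_nonneg) auto
  then have "bdd_above ((\<lambda>t. integral {0..t} ?g) ` {0..T})"
    by (intro bdd_aboveI[of _ "integral {0..T} ?g"]) auto
  then show ?thesis unfolding alpha2_eq using assms by (intro cSup_upper) auto
qed

lemma alpha2_nonneg: "0 \<le> T \<Longrightarrow> 0 \<le> alpha2 Ae T"
  using integral_le_alpha2[of 0 T Ae] by simp

text \<open>Over one sampling period, the piecewise-constant adaptive law exactly cancels the free
  response \<open>exp(T A\<^sub>e) y\<close> of the sampled error \<open>y\<close>.\<close>

lemma integral_mexp_adaptation_gain:
  assumes "hurwitz Ae" "0 < T"
  shows "integral {a..a + T} (\<lambda>s. mexp ((a + T - s) *\<^sub>R Ae) *v (adaptation_gain Ae T *v y))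
    = mexp (T *\<^sub>R Ae) *v y"
proof -
  have "integral {a..a + T} (\<lambda>s. mexp ((a + T - s) *\<^sub>R Ae)) = PhiT Ae T"
    using integral_Icc_reflect[of a "a + T" "\<lambda>s. mexp (s *\<^sub>R Ae)"]
      integral_mexp_scaleR[OF hurwitz_imp_invertible[OF assms(1)] less_imp_le[OF assms(2)]]
    by (simp add: PhiT_def)
  moreover have "integral {a..a + T} (\<lambda>s. mexp ((a + T - s) *\<^sub>R Ae) *v z)
      = integral {a..a + T} (\<lambda>s. mexp ((a + T - s) *\<^sub>R Ae)) *v z" for z
    using integral_linear[OF integrable_continuous_real
        bounded_bilinear.bounded_linear_left[OF bounded_bilinear_matrix_vector_mult],
        of a "a + T" "\<lambda>s. mexp ((a + T - s) *\<^sub>R Ae)" z]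
    by (simp add: o_def continuous_intros)
  moreover have "PhiT Ae T *v (adaptation_gain Ae T *v y) = mexp (T *\<^sub>R Ae) *v y"
    using matrix_inv_inverse[OF invertible_PhiT[OF assms]]
    by (simp add: adaptation_gain_def matrix_vector_mul_assoc matrix_mul_assoc matrix_vector_mul_lid)
  ultimately show ?thesis by simp
qed


section \<open>The prediction error under the sampled adaptive law\<close>

lemma continuous_on_Icc_if_has_integral:
  fixes y :: "real \<Rightarrow> 'a::banach"
  assumes "\<And>t. t \<in> {0..\<tau>} \<Longrightarrow> (g has_integral (y t - y0)) {0..t}"
  shows "continuous_on {0..\<tau>} y"
proof (cases "0 \<le> \<tau>")
  case True
  then have "g integrable_on {0..\<tau>}" using assms[of \<tau>] by auto
  then have "continuous_on {0..\<tau>} (\<lambda>t. y0 + integral {0..t} g)"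
    by (intro continuous_intros indefinite_integral_continuous_1)
  moreover have "y0 + integral {0..t} g = y t" if "t \<in> {0..\<tau>}" for t
    using integral_unique[OF assms[OF that]] by simp
  ultimately show ?thesis by (rule continuous_on_eq)
qed simp

lemma continuous_on_compose_locally_lipschitz:
  fixes f :: "real \<Rightarrow> real^'n \<Rightarrow> real^'m" and x :: "real \<Rightarrow> real^'n"
  assumes x: "continuous_on S x" and S: "compact S" "S \<subseteq> {0..}"
    and f: "\<And>Z. compact Z \<Longrightarrow> \<exists>L l. \<forall>j t s y z. t \<ge> 0 \<longrightarrow> s \<ge> 0 \<longrightarrow> y \<in> Z \<longrightarrow> z \<in> Z \<longrightarrow>
      \<bar>f t y $ j - f s z $ j\<bar> \<le> L j * vinf (y - z) + l j * \<bar>t - s\<bar>"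
  shows "continuous_on S (\<lambda>t. f t (x t))"
proof -
  obtain L l where L: "\<forall>j t s y z. t \<ge> 0 \<longrightarrow> s \<ge> 0 \<longrightarrow> y \<in> x ` S \<longrightarrow> z \<in> x ` S \<longrightarrow>
      \<bar>f t y $ j - f s z $ j\<bar> \<le> L j * vinf (y - z) + l j * \<bar>t - s\<bar>"
    using f[OF compact_continuous_image[OF x S(1)]] by blast
  have lip: "\<bar>f t (x t) $ j - f s (x s) $ j\<bar> \<le> L j * vinf (x t - x s) + l j * \<bar>t - s\<bar>"
    if "t \<in> S" "s \<in> S" for j t s
    using L[rule_format, of t s "x t" "x s" j] S(2) that by auto
  have "continuous_on S (\<lambda>t. f t (x t) $ j)" for j
    unfolding continuous_on_def
  proof
    fix s0 assume s0: "s0 \<in> S"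
    let ?bound = "\<lambda>s. \<bar>L j\<bar> * norm (x s - x s0) + \<bar>l j\<bar> * \<bar>s - s0\<bar>"
    have "(?bound \<longlongrightarrow> ?bound s0) (at s0 within S)"
      using x s0 unfolding continuous_on_def
      by (intro tendsto_intros) auto
    then have lim: "(?bound \<longlongrightarrow> 0) (at s0 within S)" by simp
    have ev: "\<forall>\<^sub>F s in at s0 within S. norm (f s (x s) $ j - f s0 (x s0) $ j) \<le> ?bound s"
      unfolding eventually_at_filter
    proof (rule always_eventually, intro allI impI)
      fix s assume "s \<in> S"
      have "L j * vinf (x s - x s0) \<le> \<bar>L j\<bar> * norm (x s - x s0)"
        by (rule order_trans[OF mult_right_mono[OF abs_ge_self vinf_nonneg]
              mult_left_mono[OF vinf_le_norm abs_ge_zero]])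
      moreover have "l j * \<bar>s - s0\<bar> \<le> \<bar>l j\<bar> * \<bar>s - s0\<bar>"
        by (rule mult_right_mono[OF abs_ge_self abs_ge_zero])
      ultimately show "norm (f s (x s) $ j - f s0 (x s0) $ j) \<le> ?bound s"
        using lip[OF \<open>s \<in> S\<close> s0, of j] by simp
    qed
    show "((\<lambda>t. f t (x t) $ j) \<longlongrightarrow> f s0 (x s0) $ j) (at s0 within S)"
      using Lim_null_comparison[OF ev lim] by (simp add: Lim_null[symmetric])
  qed
  then show ?thesis
    using continuous_on_vec_lambda[of S "\<lambda>j t. f t (x t) $ j"] by simp
qed

lemma sample_and_hold_eq:
  assumes "0 < T" "\<forall>t\<ge>0. \<sigma> t = \<sigma> (T * of_int \<lfloor>t / T\<rfloor>)" "real i * T \<le> s" "s < real (Suc i) * T"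
  shows "\<sigma> s = \<sigma> (real i * T)"
proof -
  have "0 \<le> real i * T" using assms(1) by simp
  then have "0 \<le> s" using assms(3) by linarith
  then have "\<sigma> s = \<sigma> (T * of_int \<lfloor>s / T\<rfloor>)" using assms(2) by blast
  also have "\<lfloor>s / T\<rfloor> = int i"
    using assms by (simp add: floor_eq_iff pos_le_divide_eq pos_divide_less_eq algebra_simps)
  finally show ?thesis by (simp add: mult.commute)
qed

locale sampled_prediction_error =
  fixes Ae :: "real^'n^'n" and B :: "real^'m^'n" and T \<tau> bf :: real
    and e u :: "real \<Rightarrow> real^'n" and F :: "real \<Rightarrow> real^'m"
  assumes hurwitz: "hurwitz Ae" and T_pos: "0 < T"
    and error_has_integral:
      "\<And>t. t \<in> {0..\<tau>} \<Longrightarrow> ((\<lambda>s. u s + Ae *v e s - B *v F s) has_integral e t) {0..t}"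
    and sampled_law: "\<And>i s. real i * T \<le> s \<Longrightarrow> s < real (Suc i) * T \<Longrightarrow>
      u s = - (adaptation_gain Ae T *v e (real i * T))"
    and F_continuous: "continuous_on {0..\<tau>} F"
    and F_bounded: "\<And>s. s \<in> {0..\<tau>} \<Longrightarrow> vinf (F s) \<le> bf"
begin

lemma error_continuous: "continuous_on {0..\<tau>} e"
proof (rule continuous_on_Icc_if_has_integral)
  show "((\<lambda>s. u s + Ae *v e s - B *v F s) has_integral e t - 0) {0..t}" if "t \<in> {0..\<tau>}" for t
    using error_has_integral[OF that] by simp
qed

lemma error_at_zero: "0 \<le> \<tau> \<Longrightarrow> e 0 = 0"
  using integral_unique[OF error_has_integral[of 0]] by simp

lemma bf_nonneg: "0 \<le> \<tau> \<Longrightarrow> 0 \<le> bf"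
  using F_bounded[of 0] vinf_nonneg[of "F 0"] by simp

lemma error_increment:
  assumes "0 \<le> a" "a \<le> t" "t \<le> \<tau>"
  shows "e t = e a + integral {a..t} (\<lambda>s. u s + Ae *v e s - B *v F s)"
proof -
  let ?G = "\<lambda>s. u s + Ae *v e s - B *v F s"
  have "integral {0..a} ?G + integral {a..t} ?G = integral {0..t} ?G"
    using assms error_has_integral[of t]
    by (intro Henstock_Kurzweil_Integration.integral_combine) auto
  then show ?thesis
    using assms integral_unique[OF error_has_integral[of a]] integral_unique[OF error_has_integral[of t]]
    by simp
qed

lemma error_on_sampling_period:
  assumes "real i * T \<le> t" "t \<le> real (Suc i) * T" "t \<le> \<tau>"
  shows "e t = mexp ((t - real i * T) *\<^sub>R Ae) *v e (real i * T)
    - integral {real i * T..t} (\<lambda>s. mexp ((t - s) *\<^sub>R Ae) *v (adaptation_gain Ae T *v e (real i * T)))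
    - integral {real i * T..t} (\<lambda>s. mexp ((t - s) *\<^sub>R Ae) *v (B *v F s))"
proof -
  define a where "a = real i * T"
  let ?E = "\<lambda>s. mexp ((t - s) *\<^sub>R Ae)"
  let ?c = "adaptation_gain Ae T *v e a"
  have a: "0 \<le> a" "a \<le> t" and sub: "{a..t} \<subseteq> {0..\<tau>}"
    using assms T_pos by (auto simp: a_def)
  have F_cont: "continuous_on {a..t} F"
    using F_continuous sub by (rule continuous_on_subset)
  have "e t = ?E a *v e a + integral {a..t} (\<lambda>s. ?E s *v (- ?c - B *v F s))"
  proof (rule variation_of_constants)
    show "continuous_on {a..t} e" using error_continuous sub by (rule continuous_on_subset)
    show "continuous_on {a..t} (\<lambda>s. - ?c - B *v F s)" using F_cont by (intro continuous_intros)
    fix v assume v: "v \<in> {a..t}"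
    have "integral {a..v} (\<lambda>s. u s + Ae *v e s - B *v F s) = integral {a..v} (\<lambda>s. Ae *v e s + (- ?c - B *v F s))"
    proof (rule integral_spike[of "{v}"])
      fix s assume "s \<in> {a..v} - {v}"
      then have "u s = - (adaptation_gain Ae T *v e (real i * T))"
        using v assms by (intro sampled_law) (auto simp: a_def)
      then have "u s = - ?c" by (simp add: a_def)
      then show "Ae *v e s + (- ?c - B *v F s) = u s + Ae *v e s - B *v F s" by simp
    qed simp
    then show "e v = e a + integral {a..v} (\<lambda>s. Ae *v e s + (- ?c - B *v F s))"
      using error_increment[of a v] a v assms by simp
  qed (use a in simp)
  also have "integral {a..t} (\<lambda>s. ?E s *v (- ?c - B *v F s))
      = - integral {a..t} (\<lambda>s. ?E s *v ?c) - integral {a..t} (\<lambda>s. ?E s *v (B *v F s))"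
    using F_cont
    by (simp add: matrix_vector_mult_diff_distrib integral_diff integral_neg integrable_neg
        integrable_continuous_real continuous_intros)
  finally show ?thesis by (simp add: a_def)
qed

lemma forced_response_le:
  assumes "real i * T \<le> t" "t \<le> real (Suc i) * T" "t \<le> \<tau>"
  shows "vinf (integral {real i * T..t} (\<lambda>s. mexp ((t - s) *\<^sub>R Ae) *v (B *v F s))) \<le> bf * alpha0 Ae B T"
proof -
  have sub: "{real i * T..t} \<subseteq> {0..\<tau>}" using assms T_pos by auto
  have "vinf (integral {real i * T..t} (\<lambda>s. mexp ((t - s) *\<^sub>R Ae) *v (B *v F s)))
      \<le> integral {0..t - real i * T} (\<lambda>s. minf (mexp (s *\<^sub>R Ae) ** B)) * bf"
    using sub by (intro vinf_integral_mexp_le continuous_on_subset[OF F_continuous] F_bounded) auto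
  also have "\<dots> \<le> alpha0 Ae B T * bf"
  proof (intro mult_right_mono integral_le_alpha0)
    have "0 \<le> real i * T" using T_pos by simp
    then show "0 \<le> bf" using assms by (intro bf_nonneg) linarith
  qed (use assms in \<open>auto simp: algebra_simps\<close>)
  finally show ?thesis by (simp add: mult.commute)
qed

lemma error_at_sample_le:
  assumes "real i * T \<le> \<tau>"
  shows "vinf (e (real i * T)) \<le> bf * alpha0 Ae B T"
proof (cases i)
  case 0
  then show ?thesis
    using assms T_pos error_at_zero bf_nonneg alpha0_nonneg[of T Ae B] by simp
next
  case (Suc k)
  define a where "a = real k * T"
  have t: "real i * T = a + T" by (simp add: Suc a_def algebra_simps)
  have "e (a + T) = - integral {a..a + T} (\<lambda>s. mexp ((a + T - s) *\<^sub>R Ae) *v (B *v F s))"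
    using error_on_sampling_period[of k "a + T"] assms t T_pos
      integral_mexp_adaptation_gain[OF hurwitz T_pos]
    by (simp add: Suc a_def)
  then show ?thesis
    using forced_response_le[of k "a + T"] assms t T_pos by (simp add: Suc a_def)
qed

theorem error_bound:
  assumes "t \<in> {0..\<tau>}"
  shows "vinf (e t) \<le> bf * alpha0 Ae B T * (alpha1 Ae T + alpha2 Ae T + 1)"
proof -
  define i where "i = nat \<lfloor>t / T\<rfloor>"
  define a where "a = real i * T"
  have "real i = of_int \<lfloor>t / T\<rfloor>" using assms T_pos by (simp add: i_def)
  then have "real i \<le> t / T" "t / T < real i + 1" by linarith+
  then have ti: "a \<le> t" "t \<le> a + T" "t \<le> real (Suc i) * T"
    using T_pos by (simp_all add: a_def pos_le_divide_eq pos_divide_less_eq algebra_simps)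
  let ?V = "vinf (e a)"
  let ?free = "mexp ((t - a) *\<^sub>R Ae) *v e a"
  let ?adapt = "integral {a..t} (\<lambda>s. mexp ((t - s) *\<^sub>R Ae) *v (adaptation_gain Ae T *v e a))"
  let ?forced = "integral {a..t} (\<lambda>s. mexp ((t - s) *\<^sub>R Ae) *v (B *v F s))"
  have V: "?V \<le> bf * alpha0 Ae B T" "0 \<le> ?V"
    using error_at_sample_le[of i] ti assms by (auto simp: a_def vinf_nonneg)
  have "vinf ?free \<le> alpha1 Ae T * ?V"
    using ti by (intro order_trans[OF vinf_mult_le_minf] mult_right_mono minf_mexp_le_alpha1 V) auto
  moreover have "vinf ?adapt \<le> alpha2 Ae T * ?V"
    using vinf_integral_mexp_le[of a t "\<lambda>s. e a" ?V Ae "adaptation_gain Ae T"] ti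
    by (intro order_trans[OF _ mult_right_mono[OF integral_le_alpha2 V(2)]]) auto
  moreover have "vinf ?forced \<le> bf * alpha0 Ae B T"
    using forced_response_le[of i t] ti assms by (simp add: a_def)
  moreover have "vinf (e t) \<le> vinf ?free + vinf ?adapt + vinf ?forced"
    using error_on_sampling_period[of i t] ti assms vinf_diff_le[of "?free - ?adapt" ?forced]
      vinf_diff_le[of ?free ?adapt]
    by (simp add: a_def)
  ultimately have "vinf (e t) \<le> (alpha1 Ae T + alpha2 Ae T) * ?V + bf * alpha0 Ae B T"
    by (simp add: distrib_right)
  also have "\<dots> \<le> (alpha1 Ae T + alpha2 Ae T) * (bf * alpha0 Ae B T) + bf * alpha0 Ae B T"
    using V alpha1_nonneg[of T Ae] alpha2_nonneg[of T Ae] T_pos by (simp add: mult_left_mono)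
  finally show ?thesis by (simp add: algebra_simps)
qed

end

theorem lemma4:
  fixes Am Ae :: "real^'n^'n"
    and B Bv :: "real^'m^'n"
    and Bp :: "nat \<Rightarrow> real^'n"
    and v :: "real \<Rightarrow> real^'m"
    and x0 :: "real^'n"
    and f :: "real \<Rightarrow> real^'n \<Rightarrow> real^'m"
    and kf :: "real^'m"
    and T \<rho> \<rho>ua \<tau> bf :: real
    and x xh :: "real \<Rightarrow> real^'n"
    and ua sig1 :: "real \<Rightarrow> real^'m"
    and sig2 :: "real \<Rightarrow> nat \<Rightarrow> real"
  assumes Am: "hurwitz Am"
    and Brank: "rank B = CARD('m)"
    and v_bdd: "bounded (range v)" and v_pc: "piecewise_continuous v"
    and f_reg: "\<forall>Z. compact Z \<longrightarrow> (\<exists>L l b. \<forall>j t s y z. t \<ge> 0 \<longrightarrow> s \<ge> 0 \<longrightarrow> y \<in> Z \<longrightarrow> z \<in> Z \<longrightarrow>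
                  \<bar>f t y $ j - f s z $ j\<bar> \<le> L j * vinf (y - z) + l j * \<bar>t - s\<bar> \<and> \<bar>f t y $ j\<bar> \<le> b j)"
    and Ae: "hurwitz Ae"
    and Bp_orth: "\<forall>j < CARD('n) - CARD('m). transpose B *v Bp j = 0"
    and Bp_rank: "dim (columns B \<union> Bp ` {..<CARD('n) - CARD('m)}) = CARD('n)"
    and T: "T > 0"
    and kf: "\<forall>j. kf $ j > 0"
    and x_eq: "\<forall>t\<ge>0. ((\<lambda>s. Am *v x s + Bv *v v s + B *v (ua s + f s (x s))) has_integral (x t - x0)) {0..t}"
    and xh_eq: "\<forall>t\<ge>0. ((\<lambda>s. Am *v x s + Bv *v v s + B *v (ua s + sig1 s)
                      + (\<Sum>j<CARD('n) - CARD('m). sig2 s j *\<^sub>R Bp j) + Ae *v (xh s - x s))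
                   has_integral (xh t - x0)) {0..t}"
    and sig_pc: "\<forall>t\<ge>0. sig1 t = sig1 (T * of_int \<lfloor>t / T\<rfloor>) \<and> sig2 t = sig2 (T * of_int \<lfloor>t / T\<rfloor>)"
    and sig_law: "\<forall>i::nat. B *v sig1 (real i * T) + (\<Sum>j<CARD('n) - CARD('m). sig2 (real i * T) j *\<^sub>R Bp j)
                   = - ((matrix_inv (PhiT Ae T) ** mexp (T *\<^sub>R Ae)) *v (xh (real i * T) - x (real i * T)))"
    and ua_eq: "\<forall>t\<ge>0. ((\<lambda>s. \<chi> j. - kf $ j * (ua s $ j + sig1 s $ j)) has_integral ua t) {0..t}"
    and bf: "\<forall>t\<ge>0. \<forall>z\<in>Omega \<rho>. \<forall>j. \<bar>f t z $ j\<bar> \<le> bf"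
    and \<rho>: "\<rho> > 0" and \<rho>ua: "\<rho>ua > 0" and \<tau>: "\<tau> \<ge> 0"
    and x_bnd: "\<forall>t\<in>{0..\<tau>}. vinf (x t) \<le> \<rho>"
    and ua_bnd: "\<forall>t\<in>{0..\<tau>}. vinf (ua t) \<le> \<rho>ua"
  shows "\<forall>t\<in>{0..\<tau>}. vinf (xh t - x t) \<le> bf * alpha0 Ae B T * (alpha1 Ae T + alpha2 Ae T + 1)"
proof -
  have x_cont: "continuous_on {0..\<tau>} x"
    using x_eq by (intro continuous_on_Icc_if_has_integral[of _ _ _ x0]) auto
  interpret sampled_prediction_error Ae B T \<tau> bf "\<lambda>s. xh s - x s"
    "\<lambda>s. B *v sig1 s + (\<Sum>j<CARD('n) - CARD('m). sig2 s j *\<^sub>R Bp j)" "\<lambda>s. f s (x s)"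
  proof
    show "((\<lambda>s. (B *v sig1 s + (\<Sum>j<CARD('n) - CARD('m). sig2 s j *\<^sub>R Bp j)) + Ae *v (xh s - x s)
        - B *v f s (x s)) has_integral xh t - x t) {0..t}" if "t \<in> {0..\<tau>}" for t
      using has_integral_diff[OF xh_eq[rule_format] x_eq[rule_format], of t] that
      by (simp add: matrix_vector_right_distrib algebra_simps)
    show "B *v sig1 s + (\<Sum>j<CARD('n) - CARD('m). sig2 s j *\<^sub>R Bp j)
        = - (adaptation_gain Ae T *v (xh (real i * T) - x (real i * T)))"
      if "real i * T \<le> s" "s < real (Suc i) * T" for i s
    proof -
      have "sig1 s = sig1 (real i * T)" "sig2 s = sig2 (real i * T)"
        using sig_pc by (blast intro: sample_and_hold_eq[OF T _ that])+
      then show ?thesis using sig_law by (simp add: adaptation_gain_def)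
    qed
    show "continuous_on {0..\<tau>} (\<lambda>s. f s (x s))"
      using f_reg by (intro continuous_on_compose_locally_lipschitz[OF x_cont]) (auto, meson)
    show "vinf (f s (x s)) \<le> bf" if "s \<in> {0..\<tau>}" for s
      using bf x_bnd that by (intro vinf_leI) (auto simp: Omega_def)
  qed (fact Ae T)+
  show ?thesis using error_bound by blast
qed

end
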